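(* Let $\Sigma$ be a finite alphabet, let $m = m_1 m_2 \cdots m_n \in \Sigma^n$ be a message with $n \ge 2$, and let $\alpha,\beta,\gamma \in \Sigma$ be pairwise distinct symbols. Let $m' = GCT(\alpha\beta\leftrightarrow\alpha\gamma, m)$ be the generalized context transformation of $m$ (defined in the context below). Let $p_0$ and $p_1$ be the empirical symbol distributions of $m$ and $m'$, respectively. Put $p_{0,\max} = \max\{p_0(\beta), p_0(\gamma)\}$ and $p_{1,\max} = \max\{p_1(\beta), p_1(\gamma)\}$. If $p_{1,\max} > p_{0,\max}$, then $H(m') < H(m)$, i.e. the transformation strictly reduces the zero-order (Shannon) entropy.
   Context: The generalized context transformation $GCT(\alpha\beta\leftrightarrow\alpha\gamma, m)$ exchanges all digrams $\alpha\beta$ for $\alpha\gamma$ and vice versa throughout the message $m$. When $\alpha \notin \{\beta,\gamma\}$, it is the message $m' = m'_1\cdots m'_n$ given by $m'_1 = m_1$ and, for $2 \le i \le n$: - $m'_i = \gamma$ if $m_{i-1} = \alpha$ and $m_i = \beta$; - $m'_i = \beta$ if $m_{i-1} = \alpha$ and $m_i = \gamma$; - $m'_i = m_i$ otherwise. For a message $w \in \Sigma^n$, its empirical symbol distribution is $p(x) = |\{i : w_i = x\}|/n$ for $x \in \Sigma$. Its zero-order (Shannon) entropy is $H(w) = -\sum_{x\in\Sigma} p(x)\log_2 p(x)$, with the convention $0\log_2 0 = 0$. *)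

theory Defs
  imports Complex_Main
begin

text \<open>Generalized context transformation GCT(ab <-> ac, m) on a message (list), 0-indexed:
  position 0 is kept; position i>0 is swapped b<->c iff the ORIGINAL previous symbol is a.\<close>
definition gct :: "'a \<Rightarrow> 'a \<Rightarrow> 'a \<Rightarrow> 'a list \<Rightarrow> 'a list" where
  "gct a b c m = map (\<lambda>i. if i = 0 then m ! 0
       else if m ! (i - 1) = a \<and> m ! i = b then c
       else if m ! (i - 1) = a \<and> m ! i = c then b
       else m ! i) [0..<length m]"

definition emp_dist :: "'a list \<Rightarrow> 'a \<Rightarrow> real" where
  "emp_dist w x = real (count_list w x) / real (length w)"

definition entropy0 :: "'a::finite list \<Rightarrow> real" where
  "entropy0 w = - (\<Sum>x\<in>(UNIV::'a set). (if emp_dist w x = 0 then 0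
                    else emp_dist w x * log 2 (emp_dist w x)))"

end

theory Submission
  imports Defs
begin

text \<open>The transformation only swaps \<open>\<beta>\<close> and \<open>\<gamma>\<close> at some positions, so it preserves the
  frequency of every other symbol and the combined frequency \<open>s\<close> of \<open>\<beta>\<close> and \<open>\<gamma>\<close>.
  The entropy therefore changes only through the term \<open>t ln t + (s - t) ln (s - t)\<close>, where
  \<open>t\<close> is the frequency of one of the two symbols; by strict convexity this term is
  strictly increasing in \<open>max t (s - t)\<close>, so the entropy strictly drops.\<close>

lemma xlnx_tangent_less:
  fixes x y :: real
  assumes "0 < x" "0 \<le> y" "y \<noteq> x"
  shows "y * ln x + y - x < y * ln y"
proof (cases "y = 0")
  case True
  then show ?thesis using assms by simp
next
  case False
  with assms have "0 < y" by simp
  with assms have "y * (ln x - ln y) < x - y"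
    using ln_diff_less[of x y] by (simp add: field_simps)
  then show ?thesis by (simp add: algebra_simps)
qed

lemma xlnx_pair_strict_mono:
  fixes s t u :: real
  assumes "s / 2 \<le> t" "t < u" "u \<le> s"
  shows "t * ln t + (s - t) * ln (s - t) < u * ln u + (s - u) * ln (s - u)"
proof -
  have pos: "0 < t" "0 < s - t" using assms by linarith+
  have "u * ln t + u - t < u * ln u"
    using xlnx_tangent_less[of t u] pos assms by simp
  moreover have "(s - u) * ln (s - t) + (s - u) - (s - t) < (s - u) * ln (s - u)"
    using xlnx_tangent_less[of "s - t" "s - u"] pos assms by simp
  moreover have "(u - t) * ln (s - t) \<le> (u - t) * ln t"
    using pos assms by (intro mult_left_mono) auto
  ultimately show ?thesis by (simp add: algebra_simps)
qed

lemma xlnx_sum_less_of_max_less: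
  fixes a b c d :: real
  assumes "0 \<le> a" "0 \<le> b" "0 \<le> c" "0 \<le> d" "a + b = c + d" "max a b < max c d"
  shows "a * ln a + b * ln b < c * ln c + d * ln d"
proof -
  have "a * ln a + b * ln b = max a b * ln (max a b) + (a + b - max a b) * ln (a + b - max a b)"
    by (simp add: max_def)
  also have "\<dots> < max c d * ln (max c d) + (a + b - max c d) * ln (a + b - max c d)"
    by (rule xlnx_pair_strict_mono) (use assms in \<open>auto simp: max_def\<close>)
  also have "\<dots> = c * ln c + d * ln d"
    using assms(5) by (simp add: max_def)
  finally show ?thesis .
qed

text \<open>No case split is needed because \<open>ln 0 = 0\<close> in Isabelle.\<close>

lemma entropy0_eq_sum:
  "entropy0 w = - (\<Sum>x\<in>UNIV. emp_dist w x * ln (emp_dist w x)) / ln 2"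
proof -
  have "(if p = 0 then 0 else p * log 2 p) = p * ln p / ln 2" for p :: real
    by (simp add: log_def)
  then show ?thesis by (simp add: entropy0_def sum_divide_distrib)
qed

lemma length_gct [simp]: "length (gct a b c m) = length m"
  by (simp add: gct_def)

lemma gct_nth_pred_iff:
  assumes "i < length m" "P b \<longleftrightarrow> P c"
  shows "P (gct a b c m ! i) \<longleftrightarrow> P (m ! i)"
  using assms by (auto simp: gct_def)

lemma length_filter_gct:
  assumes "P b \<longleftrightarrow> P c"
  shows "length (filter P (gct a b c m)) = length (filter P m)"
proof -
  have "{i. i < length m \<and> P (gct a b c m ! i)} = {i. i < length m \<and> P (m ! i)}"
    using gct_nth_pred_iff[of _ m P b c a] assms by blast
  then show ?thesis by (simp add: length_filter_conv_card)
qed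

lemma count_list_gct_other:
  assumes "x \<noteq> b" "x \<noteq> c"
  shows "count_list (gct a b c m) x = count_list m x"
  using length_filter_gct[where P = "(=) x" and a = a and m = m] assms
  by (simp add: count_list_eq_length_filter)

lemma count_list_add_eq_length_filter:
  "b \<noteq> c \<Longrightarrow> count_list xs b + count_list xs c = length (filter (\<lambda>x. x \<in> {b, c}) xs)"
  by (induction xs) auto

lemma count_list_gct_pair:
  assumes "b \<noteq> c"
  shows "count_list (gct a b c m) b + count_list (gct a b c m) c = count_list m b + count_list m c"
  using length_filter_gct[where P = "\<lambda>x. x \<in> {b, c}" and a = a and m = m] assms
  by (simp add: count_list_add_eq_length_filter)

theorem theorem1:
  fixes m :: "'a::finite list" and \<alpha> \<beta> \<gamma> :: 'a
  assumes "length m \<ge> 2"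
    and "\<alpha> \<noteq> \<beta>" and "\<alpha> \<noteq> \<gamma>" and "\<beta> \<noteq> \<gamma>"
    and "max (emp_dist (gct \<alpha> \<beta> \<gamma> m) \<beta>) (emp_dist (gct \<alpha> \<beta> \<gamma> m) \<gamma>)
         > max (emp_dist m \<beta>) (emp_dist m \<gamma>)"
  shows "entropy0 (gct \<alpha> \<beta> \<gamma> m) < entropy0 m"
proof -
  let ?m' = "gct \<alpha> \<beta> \<gamma> m"
  define L where "L w x = emp_dist w x * ln (emp_dist w x)" for w :: "'a list" and x
  have other: "L ?m' x = L m x" if "x \<notin> {\<beta>, \<gamma>}" for x
    using that by (simp add: L_def emp_dist_def count_list_gct_other)
  have "emp_dist m \<beta> + emp_dist m \<gamma> = emp_dist ?m' \<beta> + emp_dist ?m' \<gamma>"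
    using count_list_gct_pair[OF assms(4), of \<alpha> m]
    by (simp add: emp_dist_def add_divide_distrib[symmetric] flip: of_nat_add)
  then have "L m \<beta> + L m \<gamma> < L ?m' \<beta> + L ?m' \<gamma>"
    unfolding L_def using assms(5)
    by (intro xlnx_sum_less_of_max_less) (auto simp: emp_dist_def)
  moreover have "(\<Sum>x\<in>UNIV. L w x) = L w \<beta> + L w \<gamma> + (\<Sum>x\<in>UNIV - {\<beta>, \<gamma>}. L w x)" for w
    using assms(4) by (simp add: sum.subset_diff[of "{\<beta>, \<gamma>}" UNIV])
  moreover have "(\<Sum>x\<in>UNIV - {\<beta>, \<gamma>}. L ?m' x) = (\<Sum>x\<in>UNIV - {\<beta>, \<gamma>}. L m x)"
    using other by simp
  ultimately have "(\<Sum>x\<in>UNIV. L m x) < (\<Sum>x\<in>UNIV. L ?m' x)" by simp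
  then show ?thesis by (simp add: entropy0_eq_sum L_def[abs_def] divide_strict_right_mono)
qed

end
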